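(* For all typing environments $\Theta,\Gamma$, processes $P$ and session types $S$: (1) if $\Theta\cdot\Gamma\vdash P:S$ is not derivable, then there is a failing derivation of $\Theta\cdot\Gamma\vdash P:S$; (2) if there is a failing derivation of $\Theta\cdot\Gamma\vdash P:S$, then $\Theta\cdot\Gamma\vdash P:S$ is not derivable.
   Context: Values $v$, value variables $x$, process variables $X$; $a$ ranges over values and value variables; boolean predicates $A$ are type-checked by standard rules. Processes: $P,Q ::= \triangleleft \mathtt{l}(a).P \mid \triangleright\{\mathtt{l}_i(x_i).P_i\}_{i\in I} \mid \mu_X.P \mid X \mid \mathsf{if}\ A\ \mathsf{then}\ P\ \mathsf{else}\ Q \mid \mathbf{0}$ (guarded recursion). Base types $\mathsf{B}$ ($\mathsf{Int},\mathsf{Str},\mathsf{Bool},\dots$, tuples). Session types $S ::= \oplus\{!\mathtt{l}_i(\mathsf{B}_i).S_i\}_{i\in I} \mid \&\{?\mathtt{l}_i(\mathsf{B}_i).S_i\}_{i\in I} \mid \mathsf{rec}\ X.S \mid X \mid \mathsf{end}$, $I\neq\emptyset$, labels pairwise distinct, guarded recursion, equi-recursive. Typing judgements $\Theta\cdot\Gamma\vdash P:S$ with $\Theta$ a partial map from process variables to session types and $\Gamma$ a partial map from value variables to base types; $\Gamma\vdash x:\mathsf{B}$ if $\Gamma(x)=\mathsf{B}$, $\Gamma\vdash v:\mathsf{B}$ if $v\in\mathsf{B}$. Derivability is by the rules: (tBra) if for all $i\in I$, $\Theta\cdot\Gamma,x_i:\mathsf{B}_i\vdash P_i:S_i$, then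 $\Theta\cdot\Gamma\vdash \triangleright\{\mathtt{l}_i(x_i).P_i\}_{i\in I\cup J} : \&\{?\mathtt{l}_i(\mathsf{B}_i).S_i\}_{i\in I}$; (tSel) if some $i\in I$ has $\mathtt{l}=\mathtt{l}_i$, $\Gamma\vdash a:\mathsf{B}_i$ and $\Theta\cdot\Gamma\vdash P:S_i$, then $\Theta\cdot\Gamma\vdash \triangleleft\mathtt{l}(a).P : \oplus\{!\mathtt{l}_i(\mathsf{B}_i).S_i\}_{i\in I}$; (tRec) $\Theta,X:S\cdot\Gamma\vdash P:S$ implies $\Theta\cdot\Gamma\vdash\mu_X.P:S$; (tPVar) $\Theta(X)=S$ implies $\Theta\cdot\Gamma\vdash X:S$; (tIf) $\Gamma\vdash A:\mathsf{Bool}$, $\Theta\cdot\Gamma\vdash P:S$, $\Theta\cdot\Gamma\vdash Q:S$ imply $\Theta\cdot\Gamma\vdash \mathsf{if}\ A\ \mathsf{then}\ P\ \mathsf{else}\ Q:S$; (tNil) $\Theta\cdot\Gamma\vdash\mathbf{0}:\mathsf{end}$. Rule function $\Phi$, mapping a judgement $J=\Theta\cdot\Gamma\vdash P:S$ to a set: $\Phi(J)=\{\Theta\cdot\Gamma,x_i:\mathsf{B}_i\vdash P_i:S_i\}_{i\in I}$ if $P=\triangleright\{\mathtt{l}_j(x_j).P_j\}_{j\in I\cup J'}$ and $S=\&\{?\mathtt{l}_i(\mathsf{B}_i).S_i\}_{i\in I}$ for some $I,J'$; $\Phi(J)=\{\Theta\cdot\Gamma\vdash P':S_i\}$ if $P=\triangleleft\mathtt{l}(a).P'$,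 $S=\oplus\{!\mathtt{l}_i(\mathsf{B}_i).S_i\}_{i\in I}$ and there is $i\in I$ with $\mathtt{l}=\mathtt{l}_i$ and $\Gamma\vdash a:\mathsf{B}_i$; $\Phi(J)=\{\Theta\cdot\Gamma\vdash P_1:S,\ \Theta\cdot\Gamma\vdash Q_1:S\}$ if $P=\mathsf{if}\ A\ \mathsf{then}\ P_1\ \mathsf{else}\ Q_1$ and $\Gamma\vdash A:\mathsf{Bool}$; $\Phi(J)=\{\Theta,X:S\cdot\Gamma\vdash P':S\}$ if $P=\mu_X.P'$; $\Phi(J)=\{\mathsf{tt}\}$ if $P=\mathbf{0}$ and $S=\mathsf{end}$, or if $P=X$ and $\Theta(X)=S$; $\Phi(J)=\emptyset$ in all other cases. A failing derivation of $\Theta\cdot\Gamma\vdash P:S$ is a finite sequence of judgements $(J_0,J_1,\dots,J_n)$, each of the form $\Theta_i\cdot\Gamma_i\vdash P_i:S_i$, such that $J_0=\Theta\cdot\Gamma\vdash P:S$, $J_i\in\Phi(J_{i-1})$ for all $i\in 1..n$, and $\Phi(J_n)=\emptyset$. *)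

theory Defs
  imports Main "HOL-Library.Finite_Map"
begin

type_synonym label = string
type_synonym vname = string
type_synonym pname = string

datatype val = VInt int | VStr string | VBool bool | VTup "val list"

datatype btype = BInt | BStr | BBool | BTup "btype list"

inductive val_has_type :: "val \<Rightarrow> btype \<Rightarrow> bool" where
  "val_has_type (VInt n) BInt"
| "val_has_type (VStr s) BStr"
| "val_has_type (VBool b) BBool"
| "list_all2 val_has_type vs Bs \<Longrightarrow> val_has_type (VTup vs) (BTup Bs)"

datatype atom = AVal val | AVar vname

type_synonym venv = "vname \<rightharpoonup> btype"

inductive atom_has_type :: "venv \<Rightarrow> atom \<Rightarrow> btype \<Rightarrow> bool" where
  "\<Gamma> x = Some B \<Longrightarrow> atom_has_type \<Gamma> (AVar x) B"
| "val_has_type v B \<Longrightarrow> atom_has_type \<Gamma> (AVal v) B"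

datatype expr = EAtom atom | ENot expr | EAnd expr expr | EOr expr expr
  | EEq expr expr | ELess expr expr | EPlus expr expr

inductive expr_has_type :: "venv \<Rightarrow> expr \<Rightarrow> btype \<Rightarrow> bool" where
  "atom_has_type \<Gamma> a B \<Longrightarrow> expr_has_type \<Gamma> (EAtom a) B"
| "expr_has_type \<Gamma> e BBool \<Longrightarrow> expr_has_type \<Gamma> (ENot e) BBool"
| "expr_has_type \<Gamma> e1 BBool \<Longrightarrow> expr_has_type \<Gamma> e2 BBool \<Longrightarrow> expr_has_type \<Gamma> (EAnd e1 e2) BBool"
| "expr_has_type \<Gamma> e1 BBool \<Longrightarrow> expr_has_type \<Gamma> e2 BBool \<Longrightarrow> expr_has_type \<Gamma> (EOr e1 e2) BBool"
| "expr_has_type \<Gamma> e1 B \<Longrightarrow> expr_has_type \<Gamma> e2 B \<Longrightarrow> expr_has_type \<Gamma> (EEq e1 e2) BBool"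
| "expr_has_type \<Gamma> e1 BInt \<Longrightarrow> expr_has_type \<Gamma> e2 BInt \<Longrightarrow> expr_has_type \<Gamma> (ELess e1 e2) BBool"
| "expr_has_type \<Gamma> e1 BInt \<Longrightarrow> expr_has_type \<Gamma> e2 BInt \<Longrightarrow> expr_has_type \<Gamma> (EPlus e1 e2) BInt"

text \<open>Branching: a finite map from (pairwise distinct) labels to bound variable and continuation.\<close>
datatype proc =
    PSel label atom proc
  | PBra "(label, vname \<times> proc) fmap"
  | PRec pname proc
  | PVar pname
  | PIf expr proc proc
  | PNil

fun unguarded :: "pname \<Rightarrow> proc \<Rightarrow> bool" where
  "unguarded X (PVar Y) = (X = Y)"
| "unguarded X (PRec Y P) = (X \<noteq> Y \<and> unguarded X P)"
| "unguarded X (PIf A P Q) = (unguarded X P \<or> unguarded X Q)"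
| "unguarded X _ = False"

inductive guarded :: "proc \<Rightarrow> bool" where
  "guarded P \<Longrightarrow> guarded (PSel l a P)"
| "(\<forall>l x P. fmlookup bs l = Some (x, P) \<longrightarrow> guarded P) \<Longrightarrow> guarded (PBra bs)"
| "\<not> unguarded X P \<Longrightarrow> guarded P \<Longrightarrow> guarded (PRec X P)"
| "guarded (PVar X)"
| "guarded P \<Longrightarrow> guarded Q \<Longrightarrow> guarded (PIf A P Q)"
| "guarded PNil"

section \<open>Session types (equi-recursive = possibly infinite regular trees)\<close>

codatatype stype =
    TSel "(label, btype \<times> stype) fmap"
  | TBra "(label, btype \<times> stype) fmap"
  | TEnd

coinductive wf_stype :: "stype \<Rightarrow> bool" where
  "fmdom ts \<noteq> {||} \<Longrightarrow> (\<forall>l B S. fmlookup ts l = Some (B, S) \<longrightarrow> wf_stype S) \<Longrightarrow> wf_stype (TSel ts)"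
| "fmdom ts \<noteq> {||} \<Longrightarrow> (\<forall>l B S. fmlookup ts l = Some (B, S) \<longrightarrow> wf_stype S) \<Longrightarrow> wf_stype (TBra ts)"
| "wf_stype TEnd"

type_synonym penv = "pname \<rightharpoonup> stype"

inductive typed :: "penv \<Rightarrow> venv \<Rightarrow> proc \<Rightarrow> stype \<Rightarrow> bool" where
  tBra: "fmdom ts |\<subseteq>| fmdom bs \<Longrightarrow>
         (\<forall>l B S x P. fmlookup ts l = Some (B, S) \<longrightarrow> fmlookup bs l = Some (x, P)
             \<longrightarrow> typed \<Theta> (\<Gamma>(x \<mapsto> B)) P S) \<Longrightarrow>
         typed \<Theta> \<Gamma> (PBra bs) (TBra ts)"
| tSel: "fmlookup ts l = Some (B, S) \<Longrightarrow> atom_has_type \<Gamma> a B \<Longrightarrow> typed \<Theta> \<Gamma> P S \<Longrightarrow>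
         typed \<Theta> \<Gamma> (PSel l a P) (TSel ts)"
| tRec: "typed (\<Theta>(X \<mapsto> S)) \<Gamma> P S \<Longrightarrow> typed \<Theta> \<Gamma> (PRec X P) S"
| tPVar: "\<Theta> X = Some S \<Longrightarrow> typed \<Theta> \<Gamma> (PVar X) S"
| tIf: "expr_has_type \<Gamma> A BBool \<Longrightarrow> typed \<Theta> \<Gamma> P S \<Longrightarrow> typed \<Theta> \<Gamma> Q S \<Longrightarrow>
        typed \<Theta> \<Gamma> (PIf A P Q) S"
| tNil: "typed \<Theta> \<Gamma> PNil TEnd"

type_synonym judgement = "penv \<times> venv \<times> proc \<times> stype"

datatype goal = TT | Jdg judgement

fun Phi :: "judgement \<Rightarrow> goal set" where
  "Phi (\<Theta>, \<Gamma>, P, S) =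
    (case P of
       PBra bs \<Rightarrow>
         (case S of
            TBra ts \<Rightarrow>
              (if fmdom ts |\<subseteq>| fmdom bs
               then {Jdg (\<Theta>, \<Gamma>(x \<mapsto> B), P', S') | l B S' x P'.
                       fmlookup ts l = Some (B, S') \<and> fmlookup bs l = Some (x, P')}
               else {})
          | _ \<Rightarrow> {})
     | PSel l a P' \<Rightarrow>
         (case S of
            TSel ts \<Rightarrow>
              (case fmlookup ts l of
                 Some (B, S') \<Rightarrow> (if atom_has_type \<Gamma> a B then {Jdg (\<Theta>, \<Gamma>, P', S')} else {})
               | None \<Rightarrow> {})
          | _ \<Rightarrow> {})
     | PIf A P1 Q1 \<Rightarrow>
         (if expr_has_type \<Gamma> A BBool then {Jdg (\<Theta>, \<Gamma>, P1, S), Jdg (\<Theta>, \<Gamma>, Q1, S)} else {})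
     | PRec X P' \<Rightarrow> {Jdg (\<Theta>(X \<mapsto> S), \<Gamma>, P', S)}
     | PNil \<Rightarrow> (if S = TEnd then {TT} else {})
     | PVar X \<Rightarrow> (if \<Theta> X = Some S then {TT} else {}))"

definition failing_derivation :: "judgement \<Rightarrow> judgement list \<Rightarrow> bool" where
  "failing_derivation J js \<longleftrightarrow>
     js \<noteq> [] \<and> js ! 0 = J \<and>
     (\<forall>i. 0 < i \<and> i < length js \<longrightarrow> Jdg (js ! i) \<in> Phi (js ! (i - 1))) \<and>
     Phi (last js) = {}"

end

theory Submission
  imports Defs
begin

(* Phi reads the typing rules backwards, and every judgement in Phi J has a strictly smaller
   process than J. (1) A non-derivable judgement has either no Phi-premise or a non-derivable
   one; descending along non-derivable premises terminates in a failing derivation.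
   (2) Derivability together with well-formedness of the session types is preserved along Phi and
   forces Phi J to be nonempty, so no failing derivation starts at a derivable judgement.
   Well-formedness is essential: an external choice without branches is derivable, yet has no
   Phi-premise. *)

fun derivable :: "judgement \<Rightarrow> bool" where
  "derivable (\<Theta>, \<Gamma>, P, S) = typed \<Theta> \<Gamma> P S"

fun wf_judgement :: "judgement \<Rightarrow> bool" where
  "wf_judgement (\<Theta>, \<Gamma>, P, S) = (wf_stype S \<and> (\<forall>X T. \<Theta> X = Some T \<longrightarrow> wf_stype T))"

lemma failing_derivation_iff_successively:
  "failing_derivation J js \<longleftrightarrow>
     js \<noteq> [] \<and> hd js = J \<and> successively (\<lambda>J J'. Jdg J' \<in> Phi J) js \<and> Phi (last js) = {}"
  unfolding failing_derivation_def successively_conv_nth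
  by (auto simp: hd_conv_nth gr0_conv_Suc)

lemma failing_derivation_singleton: "Phi J = {} \<Longrightarrow> failing_derivation J [J]"
  by (simp add: failing_derivation_iff_successively)

lemma failing_derivation_Cons:
  "Jdg J' \<in> Phi J \<Longrightarrow> failing_derivation J' js \<Longrightarrow> failing_derivation J (J # js)"
  by (auto simp: failing_derivation_iff_successively successively_Cons)

lemma no_failing_derivation_from_invariant:
  assumes "failing_derivation J js" and "I J"
    and preserved: "\<And>J J'. I J \<Longrightarrow> Jdg J' \<in> Phi J \<Longrightarrow> I J'"
    and progress: "\<And>J. I J \<Longrightarrow> Phi J \<noteq> {}"
  shows False
  using assms(1,2)
proof (induction js arbitrary: J)
  case Nil
  then show ?case by (simp add: failing_derivation_iff_successively)
next
  case (Cons J0 js)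
  show ?case
  proof (cases js)
    case Nil
    with Cons.prems have "Phi J = {}" by (auto simp: failing_derivation_iff_successively)
    with Cons.prems(2) progress show ?thesis by blast
  next
    case (Cons J' js')
    with Cons.prems have "Jdg J' \<in> Phi J" and "failing_derivation J' js"
      by (auto simp: failing_derivation_iff_successively)
    with Cons.IH Cons.prems(2) preserved show ?thesis by blast
  qed
qed

lemma size_lt_PBra: "fmlookup bs l = Some (x, P) \<Longrightarrow> size P < size (PBra bs)"
proof -
  assume "fmlookup bs l = Some (x, P)"
  then have mem: "(l, (x, P)) \<in> fset (fset_of_fmap bs)" by (simp add: fset_of_fmap_iff)
  have "size P < Suc (size_prod (\<lambda>_. 0) size (x, P))" by simp
  also have "\<dots> \<le> size_fmap (\<lambda>_. 0) (size_prod (\<lambda>_. 0) size) bs"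
    unfolding size_fmap_def size_fset_simps
    using member_le_sum[OF mem, of "\<lambda>y. Suc ((\<lambda>(_, b). size_prod (\<lambda>_. 0) size b) y)"] by simp
  finally show ?thesis by simp
qed

lemma size_Phi_premise:
  "Jdg (\<Theta>', \<Gamma>', P', S') \<in> Phi (\<Theta>, \<Gamma>, P, S) \<Longrightarrow> size P' < size P"
proof (cases P)
  case (PBra bs)
  assume "Jdg (\<Theta>', \<Gamma>', P', S') \<in> Phi (\<Theta>, \<Gamma>, P, S)"
  with PBra obtain l x where "fmlookup bs l = Some (x, P')"
    by (auto split: stype.splits if_splits)
  with PBra show ?thesis by (simp only: size_lt_PBra)
qed (auto split: stype.splits option.splits if_splits)

lemma derivable_if_Phi_premises_derivable:
  assumes "Phi J \<noteq> {}" and "\<And>J'. Jdg J' \<in> Phi J \<Longrightarrow> derivable J'"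
  shows "derivable J"
proof (cases J rule: prod_cases4)
  case (fields \<Theta> \<Gamma> P S)
  have nonempty: "Phi (\<Theta>, \<Gamma>, P, S) \<noteq> {}"
    and premise: "\<And>\<Theta>' \<Gamma>' P' S'. Jdg (\<Theta>', \<Gamma>', P', S') \<in> Phi (\<Theta>, \<Gamma>, P, S) \<Longrightarrow> typed \<Theta>' \<Gamma>' P' S'"
    using assms fields by auto
  have "typed \<Theta> \<Gamma> P S"
  proof (cases P)
    case (PSel l a P')
    with nonempty obtain ts B S' where
      "S = TSel ts" "fmlookup ts l = Some (B, S')" "atom_has_type \<Gamma> a B"
      by (fastforce split: stype.splits option.splits if_splits)
    moreover from this PSel have "typed \<Theta> \<Gamma> P' S'" by (intro premise) simp
    ultimately show ?thesis using PSel by (blast intro: typed.tSel)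
  next
    case (PBra bs)
    with nonempty obtain ts where "S = TBra ts" "fmdom ts |\<subseteq>| fmdom bs"
      by (auto split: stype.splits if_splits)
    moreover from this PBra have "typed \<Theta> (\<Gamma>(x \<mapsto> B)) P' S'"
      if "fmlookup ts l = Some (B, S')" "fmlookup bs l = Some (x, P')" for l B S' x P'
      using that by (intro premise) auto
    ultimately show ?thesis using PBra by (blast intro: typed.tBra)
  next
    case (PRec X P')
    then have "typed (\<Theta>(X \<mapsto> S)) \<Gamma> P' S" by (intro premise) simp
    with PRec show ?thesis by (blast intro: typed.tRec)
  next
    case (PIf A P1 Q1)
    with nonempty have "expr_has_type \<Gamma> A BBool" by (simp split: if_splits)
    moreover from this PIf have "typed \<Theta> \<Gamma> P1 S" and "typed \<Theta> \<Gamma> Q1 S" by (auto intro: premise)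
    ultimately show ?thesis using PIf by (blast intro: typed.tIf)
  qed (use nonempty in \<open>auto intro: typed.intros split: if_splits\<close>)
  then show ?thesis by (simp add: fields)
qed

lemma derivable_Phi_premise:
  "derivable J \<Longrightarrow> Jdg J' \<in> Phi J \<Longrightarrow> derivable J'"
proof (cases J rule: prod_cases4)
  case (fields \<Theta> \<Gamma> P S)
  assume "derivable J" "Jdg J' \<in> Phi J"
  then have "typed \<Theta> \<Gamma> P S" by (simp add: fields)
  then show ?thesis using \<open>Jdg J' \<in> Phi J\<close> fields
    by (cases rule: typed.cases) auto
qed

lemma wf_stype_TSel_branch: "wf_stype (TSel ts) \<Longrightarrow> fmlookup ts l = Some (B, S) \<Longrightarrow> wf_stype S"
  by (auto elim: wf_stype.cases)

lemma wf_stype_TBra_branch: "wf_stype (TBra ts) \<Longrightarrow> fmlookup ts l = Some (B, S) \<Longrightarrow> wf_stype S"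
  by (auto elim: wf_stype.cases)

lemma wf_judgement_Phi_premise:
  "wf_judgement J \<Longrightarrow> Jdg J' \<in> Phi J \<Longrightarrow> wf_judgement J'"
proof (cases J rule: prod_cases4)
  case (fields \<Theta> \<Gamma> P S)
  assume "wf_judgement J" "Jdg J' \<in> Phi J"
  with fields show ?thesis
    by (cases P) (auto intro: wf_stype_TSel_branch wf_stype_TBra_branch
      split: stype.splits option.splits if_splits)
qed

lemma Phi_nonempty_if_derivable:
  "derivable J \<Longrightarrow> wf_judgement J \<Longrightarrow> Phi J \<noteq> {}"
proof (cases J rule: prod_cases4)
  case (fields \<Theta> \<Gamma> P S)
  assume "derivable J" "wf_judgement J"
  then have "typed \<Theta> \<Gamma> P S" and "wf_stype S" by (simp_all add: fields)
  then have "Phi (\<Theta>, \<Gamma>, P, S) \<noteq> {}"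
  proof (cases rule: typed.cases)
    case (tBra ts bs)
    from \<open>wf_stype S\<close> \<open>S = TBra ts\<close> have "fmdom ts \<noteq> {||}"
      by (auto elim: wf_stype.cases)
    then obtain l where "l |\<in>| fmdom ts" by auto
    then obtain B S' where "fmlookup ts l = Some (B, S')" by (auto simp: fmdom_notI)
    moreover from this tBra obtain x P' where "fmlookup bs l = Some (x, P')"
      by (metis fmdomE fmdomI fsubsetD surj_pair)
    ultimately have "Jdg (\<Theta>, \<Gamma>(x \<mapsto> B), P', S') \<in> Phi (\<Theta>, \<Gamma>, P, S)"
      using tBra by auto
    then show ?thesis by blast
  qed auto
  then show ?thesis by (simp add: fields)
qed

lemma failing_derivation_if_not_derivable:
  "\<not> typed \<Theta> \<Gamma> P S \<Longrightarrow> \<exists>js. failing_derivation (\<Theta>, \<Gamma>, P, S) js"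
proof (induction "size P" arbitrary: \<Theta> \<Gamma> P S rule: less_induct)
  case less
  let ?J = "(\<Theta>, \<Gamma>, P, S)"
  show ?case
  proof (cases "Phi ?J = {}")
    case True
    then show ?thesis using failing_derivation_singleton by blast
  next
    case False
    moreover have "\<not> derivable ?J" using less.prems by simp
    ultimately obtain J' where premise: "Jdg J' \<in> Phi ?J" and "\<not> derivable J'"
      using derivable_if_Phi_premises_derivable by blast
    obtain \<Theta>' \<Gamma>' P' S' where J': "J' = (\<Theta>', \<Gamma>', P', S')" by (cases J' rule: prod_cases4)
    from premise have "size P' < size P" unfolding J' by (rule size_Phi_premise)
    moreover have "\<not> typed \<Theta>' \<Gamma>' P' S'" using \<open>\<not> derivable J'\<close> J' by simp
    ultimately obtain js where "failing_derivation J' js" using less.hyps J' by blast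
    with premise show ?thesis by (blast intro: failing_derivation_Cons)
  qed
qed

lemma not_derivable_if_failing_derivation:
  assumes "failing_derivation J js" and "wf_judgement J"
  shows "\<not> derivable J"
proof
  assume "derivable J"
  show False
  proof (rule no_failing_derivation_from_invariant[OF assms(1)])
    show "derivable J \<and> wf_judgement J" using \<open>derivable J\<close> assms(2) ..
  qed (auto dest: derivable_Phi_premise wf_judgement_Phi_premise Phi_nonempty_if_derivable)
qed

theorem mainTheorem5:
  fixes \<Theta> :: penv and \<Gamma> :: venv and P :: proc and S :: stype
  assumes "guarded P"
    and "wf_stype S"
    and "\<forall>X T. \<Theta> X = Some T \<longrightarrow> wf_stype T"
  shows "(\<not> typed \<Theta> \<Gamma> P S \<longrightarrow> (\<exists>js. failing_derivation (\<Theta>, \<Gamma>, P, S) js))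
       \<and> ((\<exists>js. failing_derivation (\<Theta>, \<Gamma>, P, S) js) \<longrightarrow> \<not> typed \<Theta> \<Gamma> P S)"
proof (intro conjI impI)
  show "\<exists>js. failing_derivation (\<Theta>, \<Gamma>, P, S) js" if "\<not> typed \<Theta> \<Gamma> P S"
    using that by (rule failing_derivation_if_not_derivable)
  show "\<not> typed \<Theta> \<Gamma> P S" if "\<exists>js. failing_derivation (\<Theta>, \<Gamma>, P, S) js"
  proof -
    from that obtain js where "failing_derivation (\<Theta>, \<Gamma>, P, S) js" ..
    moreover have "wf_judgement (\<Theta>, \<Gamma>, P, S)" using assms(2,3) by simp
    ultimately have "\<not> derivable (\<Theta>, \<Gamma>, P, S)" by (rule not_derivable_if_failing_derivation)
    then show ?thesis by simp
  qed
qed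

end
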